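(* Let $R,S$ be Polish spaces, $e:S\to R$ a Borel map, $f:S\to\mathbb{R}^d$ a Borel map, and $\lambda\in\mathcal{M}_+(S)$ with $f\in L^1(\lambda)$. Assume that $$\mathcal{H}\big(e_\sharp(f\lambda)\,\big|\,e_\sharp\lambda\big)=\mathcal{H}(f\lambda\,|\,\lambda).$$ Let $v:R\to\mathbb{R}^d$ be a version of the density of $e_\sharp(f\lambda)$ with respect to $e_\sharp\lambda$. Then $f=v\circ e$ $\lambda$-a.e.
   Context: $\mathcal{M}_+(S)$ denotes finite positive Borel measures. For $\mu$ a finite positive measure and $\nu$ an $\mathbb{R}^d$-valued measure with Lebesgue decomposition $\nu=\frac{d\nu}{d\mu}\mu+\nu^\perp$, $\nu^\perp\perp\mu$, set $\mathcal{H}(\nu|\mu):=\int\sqrt{1+|\frac{d\nu}{d\mu}|^2}\,d\mu+|\nu^\perp|$, where $|\nu^\perp|$ is the total variation (total mass) of $\nu^\perp$. *)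

theory Defs
  imports "HOL-Analysis.Analysis"
begin

text \<open>An R^d-valued (vector) measure is represented as a set function
  nu :: 'a set => 'd on the sets of a reference measure.\<close>

definition vec_density :: "'a measure \<Rightarrow> ('a \<Rightarrow> 'd::euclidean_space) \<Rightarrow> 'a set \<Rightarrow> 'd" where
  "vec_density M f = (\<lambda>A. LINT x:A|M. f x)"

definition vec_push :: "'a measure \<Rightarrow> ('a \<Rightarrow> 'b) \<Rightarrow> ('a set \<Rightarrow> 'd) \<Rightarrow> 'b set \<Rightarrow> 'd" where
  "vec_push M e nu = (\<lambda>B. nu (e -` B \<inter> space M))"

text \<open>Lebesgue decomposition nu = g mu + nu_perp, where nu_perp is
  concentrated on the mu-null set N, i.e. nu_perp(A) = nu(A \<inter> N).\<close>
definition is_leb_decomp ::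
  "'a measure \<Rightarrow> ('a set \<Rightarrow> 'd::euclidean_space) \<Rightarrow> ('a \<Rightarrow> 'd) \<Rightarrow> 'a set \<Rightarrow> bool" where
  "is_leb_decomp M nu g N \<longleftrightarrow>
     g \<in> borel_measurable M \<and> integrable M g \<and> N \<in> sets M \<and> emeasure M N = 0 \<and>
     (\<forall>A\<in>sets M. nu A = (LINT x:A|M. g x) + nu (A \<inter> N))"

definition total_variation_on ::
  "'a measure \<Rightarrow> ('a set \<Rightarrow> 'd::euclidean_space) \<Rightarrow> 'a set \<Rightarrow> real" where
  "total_variation_on M nu N =
     (SUP P\<in>{P. finite P \<and> disjoint P \<and> P \<subseteq> sets M}. \<Sum>A\<in>P. norm (nu (A \<inter> N)))"

definition Hfun :: "('a set \<Rightarrow> 'd::euclidean_space) \<Rightarrow> 'a measure \<Rightarrow> real" where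
  "Hfun nu M = (let (g, N) = (SOME (g, N). is_leb_decomp M nu g N) in
     (\<integral>x. sqrt (1 + (norm (g x))\<^sup>2) \<partial>M) + total_variation_on M nu N)"

end

theory Submission
  imports Defs
begin

text \<open>Both densities are absolutely
  continuous, so H(f lam | lam) is the integral of jbracket (f) over lam and, v being the density of
  the push-forward, H(e#(f lam) | e# lam) is the integral of jbracket (v) over e# lam, i.e. of
  jbracket (v o e) over lam. The function jbracket is strictly convex with gradient w / jbracket w,
  so the gap jbracket (f) - jbracket (v o e) - (v o e) / jbracket (v o e) . (f - v o e) is
  nonnegative and vanishes exactly where f = v o e. The gradient term is a bounded Borel function
  of e, and f - v o e has vanishing integral over every preimage e^-1(B); hence the gradient term
  integrates to zero, the gap integrates to zero by the hypothesis, and f = v o e almost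
  everywhere.\<close>

definition jbracket :: "'a::real_normed_vector \<Rightarrow> real" where
  "jbracket z = sqrt (1 + (norm z)\<^sup>2)"

lemma jbracket_pos: "0 < jbracket z"
  unfolding jbracket_def by (simp add: add_pos_nonneg)

lemma norm_le_jbracket: "norm z \<le> jbracket z"
  unfolding jbracket_def by (rule real_le_rsqrt) simp

lemma jbracket_le_one_plus_norm: "jbracket z \<le> 1 + norm z"
  unfolding jbracket_def
  by (rule real_le_lsqrt) (simp_all add: power2_eq_square algebra_simps)

lemma borel_measurable_jbracket[measurable]: "jbracket \<in> borel_measurable borel"
  unfolding jbracket_def by measurable

lemma norm_scaleR_inverse_jbracket_le_1: "norm (z /\<^sub>R jbracket z) \<le> 1"
  using norm_le_jbracket[of z] jbracket_pos[of z] by (simp add: field_simps)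

lemma one_plus_inner_sq_le_jbracket_mult:
  fixes z w :: "'a::real_inner"
  shows "(1 + w \<bullet> z)\<^sup>2 + (norm (z - w))\<^sup>2 \<le> (jbracket z * jbracket w)\<^sup>2"
proof -
  have "(w \<bullet> z)\<^sup>2 \<le> (z \<bullet> z) * (w \<bullet> w)"
    using Cauchy_Schwarz_ineq[of w z] by (simp add: mult.commute)
  moreover have "(norm (z - w))\<^sup>2 = z \<bullet> z - 2 * (w \<bullet> z) + w \<bullet> w"
    by (simp add: power2_norm_eq_inner inner_diff_left inner_diff_right inner_commute)
  moreover have "(jbracket z * jbracket w)\<^sup>2 = (1 + z \<bullet> z) * (1 + w \<bullet> w)"
    by (simp add: jbracket_def power_mult_distrib power2_norm_eq_inner add_nonneg_nonneg)
  ultimately show ?thesis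
    by (simp add: power2_eq_square algebra_simps)
qed

lemma one_plus_inner_le_jbracket_mult:
  fixes z w :: "'a::real_inner"
  shows "1 + w \<bullet> z \<le> jbracket z * jbracket w"
    and "z \<noteq> w \<Longrightarrow> 1 + w \<bullet> z < jbracket z * jbracket w"
proof -
  have nonneg: "0 \<le> jbracket z * jbracket w"
    using jbracket_pos[of z] jbracket_pos[of w] by simp
  show "1 + w \<bullet> z \<le> jbracket z * jbracket w"
    using one_plus_inner_sq_le_jbracket_mult[of w z] zero_le_power2[of "norm (z - w)"]
    by (intro power2_le_imp_le[OF _ nonneg]) linarith
  assume "z \<noteq> w"
  then have "0 < (norm (z - w))\<^sup>2" by simp
  then show "1 + w \<bullet> z < jbracket z * jbracket w"
    using one_plus_inner_sq_le_jbracket_mult[of w z]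
    by (intro power2_less_imp_less[OF _ nonneg]) linarith
qed

lemma jbracket_mult_tangent:
  fixes z w :: "'a::real_inner"
  shows "jbracket w * (jbracket w + (w /\<^sub>R jbracket w) \<bullet> (z - w)) = 1 + w \<bullet> z"
proof -
  have "jbracket w * jbracket w = 1 + w \<bullet> w"
    unfolding jbracket_def by (simp add: power2_norm_eq_inner add_nonneg_nonneg)
  then show ?thesis
    using jbracket_pos[of w] by (simp add: field_simps inner_diff_right)
qed

lemma jbracket_tangent_le:
  fixes z w :: "'a::real_inner"
  shows "jbracket w + (w /\<^sub>R jbracket w) \<bullet> (z - w) \<le> jbracket z"
  using jbracket_mult_tangent[of w z] one_plus_inner_le_jbracket_mult(1)[of w z] jbracket_pos[of w]
  by (metis mult.commute mult_le_cancel_left_pos)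

lemma jbracket_tangent_eq_iff:
  fixes z w :: "'a::real_inner"
  shows "jbracket w + (w /\<^sub>R jbracket w) \<bullet> (z - w) = jbracket z \<longleftrightarrow> z = w"
proof
  assume "jbracket w + (w /\<^sub>R jbracket w) \<bullet> (z - w) = jbracket z"
  then have "1 + w \<bullet> z = jbracket z * jbracket w"
    using jbracket_mult_tangent[of w z] by (simp add: mult.commute)
  then show "z = w"
    using one_plus_inner_le_jbracket_mult(2)[of z w] by fastforce
qed simp

lemma integrable_jbracket:
  fixes f :: "'a \<Rightarrow> 'd::euclidean_space"
  assumes "finite_measure M" and f: "integrable M f"
  shows "integrable M (\<lambda>x. jbracket (f x))"
proof (rule Bochner_Integration.integrable_bound)
  interpret finite_measure M by fact
  show "integrable M (\<lambda>x. 1 + norm (f x))" using f by simp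
  show "(\<lambda>x. jbracket (f x)) \<in> borel_measurable M" using f by measurable
  show "AE x in M. norm (jbracket (f x)) \<le> norm (1 + norm (f x))"
  proof (intro AE_I2)
    fix x
    show "norm (jbracket (f x)) \<le> norm (1 + norm (f x))"
      using jbracket_le_one_plus_norm[of "f x"] jbracket_pos[of "f x"] by simp
  qed
qed

lemma AE_eq_if_integral_jbracket_eq:
  fixes f w :: "'a \<Rightarrow> 'd::euclidean_space"
  assumes fin: "finite_measure M" and f: "integrable M f" and w: "integrable M w"
    and orth: "(\<integral>x. (w x /\<^sub>R jbracket (w x)) \<bullet> (f x - w x) \<partial>M) = 0"
    and eq: "(\<integral>x. jbracket (f x) \<partial>M) = (\<integral>x. jbracket (w x) \<partial>M)"
  shows "AE x in M. f x = w x"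
proof -
  define gap where
    "gap x = jbracket (f x) - jbracket (w x) - (w x /\<^sub>R jbracket (w x)) \<bullet> (f x - w x)" for x
  have tangent_int: "integrable M (\<lambda>x. (w x /\<^sub>R jbracket (w x)) \<bullet> (f x - w x))"
  proof (rule Bochner_Integration.integrable_bound)
    show "integrable M (\<lambda>x. f x - w x)" using f w by simp
    show "(\<lambda>x. (w x /\<^sub>R jbracket (w x)) \<bullet> (f x - w x)) \<in> borel_measurable M"
      using f w by measurable
    show "AE x in M. norm ((w x /\<^sub>R jbracket (w x)) \<bullet> (f x - w x)) \<le> norm (f x - w x)"
    proof (intro AE_I2)
      fix x
      have "\<bar>(w x /\<^sub>R jbracket (w x)) \<bullet> (f x - w x)\<bar> \<le> norm (w x /\<^sub>R jbracket (w x)) * norm (f x - w x)"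
        by (rule Cauchy_Schwarz_ineq2)
      also have "\<dots> \<le> norm (f x - w x)"
        by (rule mult_left_le_one_le[OF norm_ge_zero norm_ge_zero norm_scaleR_inverse_jbracket_le_1])
      finally show "norm ((w x /\<^sub>R jbracket (w x)) \<bullet> (f x - w x)) \<le> norm (f x - w x)"
        by simp
    qed
  qed
  have gap_int: "integrable M gap"
    unfolding gap_def using integrable_jbracket[OF fin f] integrable_jbracket[OF fin w] tangent_int
    by simp
  have "integral\<^sup>L M gap = 0"
    unfolding gap_def using integrable_jbracket[OF fin f] integrable_jbracket[OF fin w] tangent_int
    by (simp add: orth eq del: inner_scaleR_left)
  moreover have "0 \<le> gap x" for x
    unfolding gap_def using jbracket_tangent_le[of "w x" "f x"] by simp
  ultimately have "AE x in M. gap x = 0"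
    using integral_nonneg_eq_0_iff_AE[OF gap_int] by simp
  then show ?thesis
  proof eventually_elim
    case (elim x)
    then show ?case
      using jbracket_tangent_eq_iff[of "w x" "f x"] by (simp add: gap_def)
  qed
qed

lemma total_variation_on_eq_0:
  assumes "\<And>A. A \<in> sets M \<Longrightarrow> nu (A \<inter> N) = 0"
  shows "total_variation_on M nu N = 0"
proof -
  have "(\<lambda>P. \<Sum>A\<in>P. norm (nu (A \<inter> N))) ` {P. finite P \<and> disjoint P \<and> P \<subseteq> sets M} = {0}"
  proof -
    have "{} \<in> {P. finite P \<and> disjoint P \<and> P \<subseteq> sets M}" by simp
    moreover have "(\<Sum>A\<in>P. norm (nu (A \<inter> N))) = 0" if "P \<subseteq> sets M" for P
      using that assms by (intro sum.neutral) auto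
    ultimately show ?thesis by force
  qed
  then show ?thesis unfolding total_variation_on_def by simp
qed

lemma Hfun_eq_integral_jbracket:
  fixes nu :: "'a set \<Rightarrow> 'd::euclidean_space" and g :: "'a \<Rightarrow> 'd"
  assumes sigma_finite: "sigma_finite_measure M" and g: "integrable M g"
    and nu: "\<And>A. A \<in> sets M \<Longrightarrow> nu A = (LINT x:A|M. g x)"
  shows "Hfun nu M = (\<integral>x. jbracket (g x) \<partial>M)"
proof -
  obtain g' N where SOME_eq: "(SOME (g', N). is_leb_decomp M nu g' N) = (g', N)"
    by (metis surj_pair)
  have "is_leb_decomp M nu g {}"
    unfolding is_leb_decomp_def using g nu by (simp add: set_lebesgue_integral_def)
  then have "is_leb_decomp M nu g' N"
    using someI[of "\<lambda>(g', N). is_leb_decomp M nu g' N" "(g, {})"] SOME_eq by simp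
  then have g': "integrable M g'" and N: "N \<in> null_sets M"
    and decomp: "\<And>A. A \<in> sets M \<Longrightarrow> nu A = (LINT x:A|M. g' x) + nu (A \<inter> N)"
    unfolding is_leb_decomp_def by (auto simp: null_sets_def)
  have singular_0: "nu (A \<inter> N) = 0" if "A \<in> sets M" for A
  proof -
    have "A \<inter> N \<in> sets M" using that N by auto
    have "AE x in M. indicator (A \<inter> N) x *\<^sub>R g x = 0"
      using AE_not_in[OF N] by eventually_elim auto
    then show ?thesis
      using nu \<open>A \<inter> N \<in> sets M\<close> by (simp add: set_lebesgue_integral_def integral_eq_zero_AE)
  qed
  have "AE x in M. g' x = g x"
    using g' g decomp nu singular_0
    by (intro sigma_finite_measure.density_unique_banach[OF sigma_finite]) auto
  then have "(\<integral>x. jbracket (g' x) \<partial>M) = (\<integral>x. jbracket (g x) \<partial>M)"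
    using g' g by (intro integral_cong_AE) auto
  then show ?thesis
    using total_variation_on_eq_0[of M nu N, OF singular_0] unfolding Hfun_def SOME_eq jbracket_def by simp
qed

lemma set_integral_distr:
  fixes v :: "'b \<Rightarrow> 'c::{banach, second_countable_topology}"
  assumes [measurable]: "e \<in> measurable M N" "v \<in> borel_measurable N" "B \<in> sets N"
  shows "(LINT y:B|distr M N e. v y) = (LINT x:e -` B \<inter> space M|M. v (e x))"
  unfolding set_lebesgue_integral_def
  by (simp add: integral_distr) (intro Bochner_Integration.integral_cong; simp split: split_indicator)

lemma distr_density_pos_part_eq_neg_part:
  fixes g :: "'a \<Rightarrow> real"
  assumes [measurable]: "e \<in> measurable M N" and g: "integrable M g"
    and zero: "\<And>B. B \<in> sets N \<Longrightarrow> (LINT x:e -` B \<inter> space M|M. g x) = 0"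
  shows "distr (density M (\<lambda>x. max 0 (g x))) N e = distr (density M (\<lambda>x. max 0 (- g x))) N e"
proof (rule measure_eqI)
  fix B assume "B \<in> sets (distr (density M (\<lambda>x. max 0 (g x))) N e)"
  then have B[measurable]: "B \<in> sets N" by simp
  define A where "A = e -` B \<inter> space M"
  have A[measurable]: "A \<in> sets M" unfolding A_def by measurable
  have emeasure_eq: "emeasure (distr (density M (\<lambda>x. max 0 (u x))) N e) B
      = ennreal (\<integral>x. max 0 (u x * indicator A x) \<partial>M)" if u: "integrable M u" for u :: "'a \<Rightarrow> real"
  proof -
    have [measurable]: "u \<in> borel_measurable M" using u by simp
    have "emeasure (distr (density M (\<lambda>x. max 0 (u x))) N e) B = (\<integral>\<^sup>+x. max 0 (u x * indicator A x) \<partial>M)"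
      unfolding A_def
      by (simp add: emeasure_distr emeasure_density) (intro nn_integral_cong; simp split: split_indicator)
    also have "\<dots> = ennreal (\<integral>x. max 0 (u x * indicator A x) \<partial>M)"
      using integrable_real_mult_indicator[OF A u] by (intro nn_integral_eq_integral) auto
    finally show ?thesis .
  qed
  have gA: "integrable M (\<lambda>x. g x * indicator A x)"
    using A g by (rule integrable_real_mult_indicator)
  have "0 = (\<integral>x. g x * indicator A x \<partial>M)"
    using zero[OF B] unfolding A_def[symmetric] set_lebesgue_integral_def by (simp add: mult.commute)
  also have "\<dots> = (\<integral>x. max 0 (g x * indicator A x) - max 0 (- g x * indicator A x) \<partial>M)"
    by (intro Bochner_Integration.integral_cong) auto
  also have "\<dots> = (\<integral>x. max 0 (g x * indicator A x) \<partial>M) - (\<integral>x. max 0 (- g x * indicator A x) \<partial>M)"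
    using gA by (intro Bochner_Integration.integral_diff) auto
  finally show "emeasure (distr (density M (\<lambda>x. max 0 (g x))) N e) B
      = emeasure (distr (density M (\<lambda>x. max 0 (- g x))) N e) B"
    using emeasure_eq[OF g] emeasure_eq[of "\<lambda>x. - g x"] g by simp
qed simp

lemma integral_comp_mult_eq_0:
  fixes g :: "'a \<Rightarrow> real" and h :: "'b \<Rightarrow> real"
  assumes e[measurable]: "e \<in> measurable M N" and g: "integrable M g"
    and [measurable]: "h \<in> borel_measurable N" and h_bounded: "\<And>y. \<bar>h y\<bar> \<le> C"
    and zero: "\<And>B. B \<in> sets N \<Longrightarrow> (LINT x:e -` B \<inter> space M|M. g x) = 0"
  shows "(\<integral>x. h (e x) * g x \<partial>M) = 0"
proof -
  have [measurable]: "g \<in> borel_measurable M" using g by simp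
  have integral_part: "(\<integral>y. h y \<partial>distr (density M (\<lambda>x. max 0 (u x))) N e) = (\<integral>x. max 0 (u x) * h (e x) \<partial>M)"
    and integrable_part: "integrable M (\<lambda>x. max 0 (u x) * h (e x))"
    if u: "u \<in> {g, \<lambda>x. - g x}" for u
  proof -
    have [measurable]: "u \<in> borel_measurable M" using u by auto
    show "(\<integral>y. h y \<partial>distr (density M (\<lambda>x. max 0 (u x))) N e) = (\<integral>x. max 0 (u x) * h (e x) \<partial>M)"
      by (simp add: integral_distr integral_density)
    show "integrable M (\<lambda>x. max 0 (u x) * h (e x))"
    proof (rule Bochner_Integration.integrable_bound)
      show "integrable M (\<lambda>x. C * g x)" using g by simp
      show "AE x in M. norm (max 0 (u x) * h (e x)) \<le> norm (C * g x)"
      proof (intro AE_I2)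
        fix x
        have "\<bar>max 0 (u x)\<bar> * \<bar>h (e x)\<bar> \<le> \<bar>g x\<bar> * \<bar>C\<bar>"
          using u h_bounded[of "e x"] by (intro mult_mono) auto
        then show "norm (max 0 (u x) * h (e x)) \<le> norm (C * g x)"
          by (simp add: abs_mult mult.commute)
      qed
    qed measurable
  qed
  have "(\<integral>x. h (e x) * g x \<partial>M) = (\<integral>x. max 0 (g x) * h (e x) - max 0 (- g x) * h (e x) \<partial>M)"
    by (intro Bochner_Integration.integral_cong) (auto simp: max_def algebra_simps)
  also have "\<dots> = (\<integral>x. max 0 (g x) * h (e x) \<partial>M) - (\<integral>x. max 0 (- g x) * h (e x) \<partial>M)"
    using integrable_part by (intro Bochner_Integration.integral_diff) auto
  also have "\<dots> = 0"
    using integral_part[of g] integral_part[of "\<lambda>x. - g x"] distr_density_pos_part_eq_neg_part[OF e g zero]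
    by simp
  finally show ?thesis .
qed

lemma integral_inner_comp_eq_0:
  fixes g :: "'a \<Rightarrow> 'd::euclidean_space" and h :: "'b \<Rightarrow> 'd"
  assumes e[measurable]: "e \<in> measurable M N" and g: "integrable M g"
    and [measurable]: "h \<in> borel_measurable N" and h_bounded: "\<And>y. norm (h y) \<le> C"
    and zero: "\<And>B. B \<in> sets N \<Longrightarrow> (LINT x:e -` B \<inter> space M|M. g x) = 0"
  shows "(\<integral>x. h (e x) \<bullet> g x \<partial>M) = 0"
proof -
  have [measurable]: "g \<in> borel_measurable M" using g by simp
  have component_0: "(\<integral>x. (h (e x) \<bullet> i) * (g x \<bullet> i) \<partial>M) = 0"
    and component_integrable: "integrable M (\<lambda>x. (h (e x) \<bullet> i) * (g x \<bullet> i))"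
    if i: "i \<in> Basis" for i
  proof -
    have h_i_bounded: "\<bar>h y \<bullet> i\<bar> \<le> C" for y
      using Basis_le_norm[OF i, of "h y"] h_bounded[of y] by linarith
    have "0 \<le> C" using h_bounded[of undefined] norm_ge_zero[of "h undefined"] by linarith
    show "(\<integral>x. (h (e x) \<bullet> i) * (g x \<bullet> i) \<partial>M) = 0"
    proof (rule integral_comp_mult_eq_0[OF e _ _ h_i_bounded])
      fix B :: "'b set" assume "B \<in> sets N"
      then have "e -` B \<inter> space M \<in> sets M" by measurable
      then have "(LINT x:e -` B \<inter> space M|M. g x \<bullet> i) = (LINT x:e -` B \<inter> space M|M. g x) \<bullet> i"
        unfolding set_lebesgue_integral_def
        by (subst integral_inner_left[symmetric]) (auto intro: integrable_mult_indicator g)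
      then show "(LINT x:e -` B \<inter> space M|M. g x \<bullet> i) = 0"
        using zero[OF \<open>B \<in> sets N\<close>] by simp
    qed (use g in auto)
    show "integrable M (\<lambda>x. (h (e x) \<bullet> i) * (g x \<bullet> i))"
    proof (rule Bochner_Integration.integrable_bound)
      show "integrable M (\<lambda>x. C * norm (g x))" using g by simp
      show "AE x in M. norm ((h (e x) \<bullet> i) * (g x \<bullet> i)) \<le> norm (C * norm (g x))"
      proof (intro AE_I2)
        fix x
        have "\<bar>h (e x) \<bullet> i\<bar> * \<bar>g x \<bullet> i\<bar> \<le> C * norm (g x)"
          using h_i_bounded[of "e x"] Basis_le_norm[OF i, of "g x"] \<open>0 \<le> C\<close> by (intro mult_mono) simp_all
        also have "\<dots> \<le> norm (C * norm (g x))"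
          by (simp add: abs_mult mult_right_mono)
        finally show "norm ((h (e x) \<bullet> i) * (g x \<bullet> i)) \<le> norm (C * norm (g x))"
          by (simp add: abs_mult)
      qed
    qed measurable
  qed
  have "(\<integral>x. h (e x) \<bullet> g x \<partial>M) = (\<integral>x. (\<Sum>i\<in>Basis. (h (e x) \<bullet> i) * (g x \<bullet> i)) \<partial>M)"
    by (intro Bochner_Integration.integral_cong refl) (rule euclidean_inner)
  also have "\<dots> = (\<Sum>i\<in>Basis. \<integral>x. (h (e x) \<bullet> i) * (g x \<bullet> i) \<partial>M)"
    using component_integrable by (rule Bochner_Integration.integral_sum)
  also have "\<dots> = 0"
    using component_0 by simp
  finally show ?thesis .
qed

theorem lemma5p10:
  fixes e :: "'s::polish_space \<Rightarrow> 'r::polish_space"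
    and f :: "'s \<Rightarrow> 'd::euclidean_space"
    and v :: "'r \<Rightarrow> 'd"
    and lam :: "'s measure"
  assumes sets_lam: "sets lam = sets borel"
    and fin: "finite_measure lam"
    and e_meas: "e \<in> borel_measurable borel"
    and f_meas: "f \<in> borel_measurable borel"
    and f_int: "integrable lam f"
    and H_eq: "Hfun (vec_push lam e (vec_density lam f)) (distr lam borel e) = Hfun (vec_density lam f) lam"
    and v_meas: "v \<in> borel_measurable borel"
    and v_int: "integrable (distr lam borel e) v"
    and v_dens: "\<forall>B\<in>sets (borel :: 'r measure).
                   (LINT y:B|distr lam borel e. v y) = vec_push lam e (vec_density lam f) B"
  shows "AE x in lam. f x = v (e x)"
proof -
  interpret finite_measure lam by (rule fin)
  have e_lam[measurable]: "e \<in> measurable lam borel"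
    using e_meas measurable_cong_sets[OF sets_lam refl] by blast
  note v_meas[measurable]
  have ve_int: "integrable lam (\<lambda>x. v (e x))"
    using v_int by (simp add: integrable_distr_eq)
  have "(LINT x:e -` B \<inter> space lam|lam. f x - v (e x)) = 0" if "B \<in> sets borel" for B
    using v_dens that set_integral_distr[OF e_lam v_meas that] f_int ve_int
    by (simp add: vec_push_def vec_density_def set_integrable_def integrable_mult_indicator)
  then have "(\<integral>x. (v (e x) /\<^sub>R jbracket (v (e x))) \<bullet> (f x - v (e x)) \<partial>lam) = 0"
    using f_int ve_int norm_scaleR_inverse_jbracket_le_1
    by (intro integral_inner_comp_eq_0[OF e_lam, where h="\<lambda>y. v y /\<^sub>R jbracket (v y)" and C=1]) auto
  moreover have "(\<integral>x. jbracket (f x) \<partial>lam) = (\<integral>x. jbracket (v (e x)) \<partial>lam)"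
  proof -
    have "Hfun (vec_density lam f) lam = (\<integral>x. jbracket (f x) \<partial>lam)"
      using f_int by (intro Hfun_eq_integral_jbracket) (unfold_locales, simp_all add: vec_density_def)
    moreover have "Hfun (vec_push lam e (vec_density lam f)) (distr lam borel e)
        = (\<integral>y. jbracket (v y) \<partial>distr lam borel e)"
      using v_int v_dens finite_measure_distr[of e borel]
      by (intro Hfun_eq_integral_jbracket) (auto simp: finite_measure_def)
    ultimately show ?thesis
      using H_eq by (simp add: integral_distr)
  qed
  ultimately show ?thesis
    by (rule AE_eq_if_integral_jbracket_eq[OF fin f_int ve_int])
qed

end
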